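(* Let $k$ be a field, $(C,\Delta)$ a coassociative coalgebra over $k$, and $(L,\phi)$ a Lie algebra over $k$ with bracket $\phi(x,y)=[x,y]$. Let $\Phi:Hom(C,L)\otimes Hom(C,L)\to Hom(C,L)$ be the induced map, $\Phi(f\otimes g)(c)=\sum[f(c_{(1)}),g(c_{(2)})]$. Then: (i) $\Phi\circ\tau=-\Phi^{\tau}$, where $\tau$ is the transposition; i.e. $\Phi(g\otimes f)(c)=-\sum[f(c_{(2)}),g(c_{(1)})]$ for all $f,g\in Hom(C,L)$, $c\in C$; (ii) $\Phi\circ(1\otimes\Phi)+(\Phi\circ(1\otimes\Phi))^{\xi}\circ\xi+(\Phi\circ(1\otimes\Phi))^{\xi^2}\circ\xi^2=0$, where $\xi=(1\,2\,3)\in S_3$; explicitly, for all $g_1,g_2,g_3\in Hom(C,L)$ and $c\in C$, with $\Delta^{(2)}(c)=\sum c_{(1)}\otimes c_{(2)}\otimes c_{(3)}$, $$\sum\Big([g_1(c_{(1)}),[g_2(c_{(2)}),g_3(c_{(3)})]]+[g_2(c_{(2)}),[g_3(c_{(3)}),g_1(c_{(1)})]]+[g_3(c_{(3)}),[g_1(c_{(1)}),g_2(c_{(2)})]]\Big)=0.$$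
   Context: $\Delta^{(1)}=\Delta$, $\Delta^{(2)}=(\Delta\otimes1)\circ\Delta$; Sweedler notation $\Delta(c)=\sum c_{(1)}\otimes c_{(2)}$. $S_n$ acts on $n$-fold tensor products (of elements of $C$, $L$, or $Hom(C,L)$) by $\sigma(x_1\otimes\dots\otimes x_n)=x_{\sigma(1)}\otimes\dots\otimes x_{\sigma(n)}$. For a map $\Theta$ induced by $\theta:L^{\otimes n}\to L$ (i.e. $\Theta(f_1\otimes\dots\otimes f_n)=\theta\circ(f_1\otimes\dots\otimes f_n)\circ\Delta^{(n-1)}$) and $\sigma\in S_n$, $\Theta^\sigma(f_1\otimes\dots\otimes f_n)=\theta\circ(f_1\otimes\dots\otimes f_n)\circ\sigma\circ\Delta^{(n-1)}$. In (ii), $\Phi\circ(1\otimes\Phi)$ is the map induced by $\theta=\phi\circ(1\otimes\phi)$ and $(\Phi\circ(1\otimes\Phi))^\sigma$ is the corresponding $\Theta^\sigma$. *)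

theory Defs
  imports Main "HOL.Vector_Spaces"
begin

text \<open>Vector spaces over a field 'k are given by scalar multiplications s (locale vector_space);
  Hom(C,L) is the set of maps f with Vector_Spaces.linear sC sL f.\<close>

definition bilin ::
  "('k::field \<Rightarrow> 'v::ab_group_add \<Rightarrow> 'v) \<Rightarrow> ('k \<Rightarrow> 'w::ab_group_add \<Rightarrow> 'w) \<Rightarrow> ('k \<Rightarrow> 'u::ab_group_add \<Rightarrow> 'u)
    \<Rightarrow> ('v \<Rightarrow> 'w \<Rightarrow> 'u) \<Rightarrow> bool" where
  "bilin s1 s2 s3 B \<longleftrightarrow>
     (\<forall>y. Vector_Spaces.linear s1 s3 (\<lambda>x. B x y)) \<and> (\<forall>x. Vector_Spaces.linear s2 s3 (\<lambda>y. B x y))"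

definition trilin_form ::
  "('k::field \<Rightarrow> 'v::ab_group_add \<Rightarrow> 'v) \<Rightarrow> ('v \<Rightarrow> 'v \<Rightarrow> 'v \<Rightarrow> 'k) \<Rightarrow> bool" where
  "trilin_form s T \<longleftrightarrow>
     (\<forall>y z. Vector_Spaces.linear s (*) (\<lambda>x. T x y z)) \<and> (\<forall>x z. Vector_Spaces.linear s (*) (\<lambda>y. T x y z))
     \<and> (\<forall>x y. Vector_Spaces.linear s (*) (\<lambda>z. T x y z))"

text \<open>A comultiplication is given by choosing, for each c, a finite list of pairs (a_i,b_i)
  with Delta(c) = sum_i a_i (x) b_i.  Since tensors over a field are separated by
  bilinear (resp. trilinear) forms, linearity of Delta and coassociativity
  (Delta (x) 1) o Delta = (1 (x) Delta) o Delta are expressed by pairing with such forms.\<close>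
definition coalgebra ::
  "('k::field \<Rightarrow> 'c::ab_group_add \<Rightarrow> 'c) \<Rightarrow> ('c \<Rightarrow> ('c \<times> 'c) list) \<Rightarrow> bool" where
  "coalgebra s delta \<longleftrightarrow> vector_space s \<and>
     (\<forall>B. bilin s s (*) B \<longrightarrow> Vector_Spaces.linear s (*) (\<lambda>c. \<Sum>(a,b)\<leftarrow>delta c. B a b)) \<and>
     (\<forall>T. trilin_form s T \<longrightarrow> (\<forall>c.
        (\<Sum>(a,b)\<leftarrow>delta c. \<Sum>(a1,a2)\<leftarrow>delta a. T a1 a2 b)
      = (\<Sum>(a,b)\<leftarrow>delta c. \<Sum>(b1,b2)\<leftarrow>delta b. T a b1 b2)))"

definition lie_algebra ::
  "('k::field \<Rightarrow> 'l::ab_group_add \<Rightarrow> 'l) \<Rightarrow> ('l \<Rightarrow> 'l \<Rightarrow> 'l) \<Rightarrow> bool" where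
  "lie_algebra s phi \<longleftrightarrow> vector_space s \<and> bilin s s s phi \<and> (\<forall>x. phi x x = 0) \<and>
     (\<forall>x y z. phi x (phi y z) + phi y (phi z x) + phi z (phi x y) = 0)"

definition delta2 :: "('c \<Rightarrow> ('c \<times> 'c) list) \<Rightarrow> 'c \<Rightarrow> ('c \<times> 'c \<times> 'c) list" where
  "delta2 delta c = concat (map (\<lambda>(a,b). map (\<lambda>(a1,a2). (a1,a2,b)) (delta a)) (delta c))"

definition Phi :: "('l \<Rightarrow> 'l \<Rightarrow> 'l::ab_group_add) \<Rightarrow> ('c \<Rightarrow> ('c \<times> 'c) list)
    \<Rightarrow> ('c \<Rightarrow> 'l) \<Rightarrow> ('c \<Rightarrow> 'l) \<Rightarrow> 'c \<Rightarrow> 'l" where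
  "Phi phi delta f g c = (\<Sum>(a,b)\<leftarrow>delta c. phi (f a) (g b))"

end

theory Submission
  imports Defs
begin

text \<open>Both identities hold summand by summand: (i) is antisymmetry of the bracket and (ii) is
  the Jacobi identity for each triple of \<open>delta2 delta c\<close>.\<close>

lemma lie_algebra_antisym:
  assumes "lie_algebra s phi"
  shows "phi y x = - phi x y"
proof -
  have alt: "\<And>x. phi x x = 0" and "bilin s s s phi"
    using assms by (auto simp: lie_algebra_def)
  then have add_left: "\<And>x x' w. phi (x + x') w = phi x w + phi x' w"
    and add_right: "\<And>x x' w. phi w (x + x') = phi w x + phi w x'"
    by (auto simp: bilin_def linear_iff)
  have "0 = phi (x + y) (x + y)" using alt by simp
  also have "\<dots> = phi x x + phi x y + phi y x + phi y y" by (simp add: add_left add_right)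
  also have "\<dots> = phi y x + phi x y" by (simp add: alt add.commute)
  finally show ?thesis unfolding eq_neg_iff_add_eq_0 by (rule sym)
qed

lemma Phi_swap:
  assumes "lie_algebra s phi"
  shows "Phi phi delta g f c = - (\<Sum>(a,b)\<leftarrow>delta c. phi (f b) (g a))"
proof -
  have "\<And>a b. phi (g a) (f b) = - phi (f b) (g a)"
    using lie_algebra_antisym[OF assms] .
  then have "Phi phi delta g f c = (\<Sum>(a,b)\<leftarrow>delta c. - phi (f b) (g a))"
    unfolding Phi_def by simp
  also have "\<dots> = - (\<Sum>(a,b)\<leftarrow>delta c. phi (f b) (g a))"
    by (simp add: uminus_sum_list_map comp_def case_prod_beta')
  finally show ?thesis .
qed

lemma sum_list_jacobi:
  assumes "lie_algebra s phi"
  shows "(\<Sum>(c1,c2,c3)\<leftarrow>xs.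
            phi (g1 c1) (phi (g2 c2) (g3 c3))
          + phi (g2 c2) (phi (g3 c3) (g1 c1))
          + phi (g3 c3) (phi (g1 c1) (g2 c2))) = 0"
  using assms by (simp add: lie_algebra_def case_prod_beta')

theorem proposition3:
  fixes sC :: "'k::field \<Rightarrow> 'c::ab_group_add \<Rightarrow> 'c"
    and sL :: "'k \<Rightarrow> 'l::ab_group_add \<Rightarrow> 'l"
    and delta :: "'c \<Rightarrow> ('c \<times> 'c) list"
    and phi :: "'l \<Rightarrow> 'l \<Rightarrow> 'l"
  assumes "coalgebra sC delta"
    and "lie_algebra sL phi"
  shows "(\<forall>f g c. Vector_Spaces.linear sC sL f \<longrightarrow> Vector_Spaces.linear sC sL g \<longrightarrow>
            Phi phi delta g f c = - (\<Sum>(a,b)\<leftarrow>delta c. phi (f b) (g a)))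
      \<and> (\<forall>g1 g2 g3 c. Vector_Spaces.linear sC sL g1 \<longrightarrow> Vector_Spaces.linear sC sL g2 \<longrightarrow> Vector_Spaces.linear sC sL g3 \<longrightarrow>
            (\<Sum>(c1,c2,c3)\<leftarrow>delta2 delta c.
                 phi (g1 c1) (phi (g2 c2) (g3 c3))
               + phi (g2 c2) (phi (g3 c3) (g1 c1))
               + phi (g3 c3) (phi (g1 c1) (g2 c2))) = 0)"
  by (intro conjI allI impI Phi_swap[OF assms(2)] sum_list_jacobi[OF assms(2)])

end
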